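(* Let $G$ be a strongly regular graph with parameters $(n,d,\lambda,\mu)$ and restricted eigenvalues $r>s$, and suppose that the clique number satisfies $\omega(G)=1-d/s$. Let $m$ be the number of edges of $G$, let $\theta_1\ge\theta_2\ge\cdots\ge\theta_n$ be the eigenvalues of its adjacency matrix, let $n^+$ be the number of positive eigenvalues, write $\omega=\omega(G)$, and let $\ell=\min(n^+,\omega)$. Then \[ \theta_1^2+\theta_2^2+\cdots+\theta_\ell^2\le \frac{2m(\omega-1)}{\omega}. \]
   Context: A strongly regular graph with parameters $(n,d,\lambda,\mu)$ is a $d$-regular graph on $n$ vertices in which every pair of adjacent vertices has exactly $\lambda$ common neighbours and every pair of distinct non-adjacent vertices has exactly $\mu$ common neighbours. Its restricted eigenvalues $r>s$ are the adjacency eigenvalues other than the degree $d$ (those with eigenvectors orthogonal to the all-ones vector). Here $\mu$ denotes the SRG parameter, not an eigenvalue. *)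

theory Defs
  imports "Jordan_Normal_Form.Char_Poly"
begin

definition simple_graph :: "nat \<Rightarrow> (nat \<Rightarrow> nat \<Rightarrow> bool) \<Rightarrow> bool" where
  "simple_graph n E \<longleftrightarrow> (\<forall>i<n. \<forall>j<n. E i j = E j i) \<and> (\<forall>i<n. \<not> E i i)"

definition adj_mat :: "nat \<Rightarrow> (nat \<Rightarrow> nat \<Rightarrow> bool) \<Rightarrow> real mat" where
  "adj_mat n E = mat n n (\<lambda>(i,j). if E i j then 1 else 0)"

definition nbrs :: "nat \<Rightarrow> (nat \<Rightarrow> nat \<Rightarrow> bool) \<Rightarrow> nat \<Rightarrow> nat set" where
  "nbrs n E i = {j. j < n \<and> E i j}"

definition strongly_regular :: "nat \<Rightarrow> (nat \<Rightarrow> nat \<Rightarrow> bool) \<Rightarrow> nat \<Rightarrow> nat \<Rightarrow> nat \<Rightarrow> bool" where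
  "strongly_regular n E d lam mu \<longleftrightarrow> simple_graph n E \<and>
     (\<forall>i<n. card (nbrs n E i) = d) \<and>
     (\<forall>i<n. \<forall>j<n. E i j \<longrightarrow> card (nbrs n E i \<inter> nbrs n E j) = lam) \<and>
     (\<forall>i<n. \<forall>j<n. i \<noteq> j \<and> \<not> E i j \<longrightarrow> card (nbrs n E i \<inter> nbrs n E j) = mu)"

definition restricted_eigenvalue :: "nat \<Rightarrow> (nat \<Rightarrow> nat \<Rightarrow> bool) \<Rightarrow> real \<Rightarrow> bool" where
  "restricted_eigenvalue n E t \<longleftrightarrow>
     (\<exists>v. eigenvector (adj_mat n E) v t \<and> v \<bullet> vec n (\<lambda>_. 1) = 0)"

definition is_clique :: "nat \<Rightarrow> (nat \<Rightarrow> nat \<Rightarrow> bool) \<Rightarrow> nat set \<Rightarrow> bool" where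
  "is_clique n E C \<longleftrightarrow> C \<subseteq> {0..<n} \<and> (\<forall>x\<in>C. \<forall>y\<in>C. x \<noteq> y \<longrightarrow> E x y)"

definition clique_number :: "nat \<Rightarrow> (nat \<Rightarrow> nat \<Rightarrow> bool) \<Rightarrow> nat" where
  "clique_number n E = Max (card ` {C. is_clique n E C})"

definition num_edges :: "nat \<Rightarrow> (nat \<Rightarrow> nat \<Rightarrow> bool) \<Rightarrow> nat" where
  "num_edges n E = card {(i,j). i < j \<and> j < n \<and> E i j}"

end

theory Submission
  imports Defs "Jordan_Normal_Form.Schur_Decomposition"
begin

(* The adjacency eigenvalues are d, r and s, with s < 0 \<le> r \<le> d; they sum to tr A = 0 and their
   squares sum to tr A^2 = 2m. Each real x with x \<le> s or 0 \<le> x \<le> d satisfies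
   (d - s) max(0,x)^2 \<le> d (x^2 - s x), and summing this over the spectrum bounds the sum of the
   squared positive eigenvalues by 2md/(d - s). The clique hypothesis says exactly that
   d/(d - s) = (\<omega> - 1)/\<omega>. *)

definition trace :: "'a::comm_ring_1 mat \<Rightarrow> 'a" where
  "trace A = (\<Sum>i<dim_row A. A $$ (i,i))"

lemma trace_mult_comm:
  assumes "A \<in> carrier_mat n m" "B \<in> carrier_mat m n"
  shows "trace (A * B) = trace (B * A)"
proof -
  have "trace (A * B) = (\<Sum>i<n. \<Sum>k<m. A $$ (i,k) * B $$ (k,i))"
    using assms by (simp add: trace_def scalar_prod_def lessThan_atLeast0)
  also have "\<dots> = (\<Sum>k<m. \<Sum>i<n. B $$ (k,i) * A $$ (i,k))"
    by (subst sum.swap) (simp add: mult.commute)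
  also have "\<dots> = trace (B * A)"
    using assms by (simp add: trace_def scalar_prod_def lessThan_atLeast0)
  finally show ?thesis .
qed

lemma trace_similar_mat_wit:
  assumes "similar_mat_wit A B P Q"
  shows "trace A = trace B"
proof -
  define n where "n = dim_row A"
  from similar_mat_witD[OF n_def assms] have carriers: "{A, B, P, Q} \<subseteq> carrier_mat n n"
    and "Q * P = 1\<^sub>m n" and "A = P * B * Q" by auto
  then have "trace A = trace (Q * (P * B))"
    by (metis insert_subset mult_carrier_mat trace_mult_comm)
  also have "Q * (P * B) = B"
    using carriers \<open>Q * P = 1\<^sub>m n\<close> by (auto simp: assoc_mult_mat[symmetric, of Q n n P n B n])
  finally show ?thesis .
qed

lemma upper_triangular_mult_diag:
  assumes "upper_triangular A" "upper_triangular B"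
    and "A \<in> carrier_mat n n" "B \<in> carrier_mat n n" "i < n"
  shows "(A * B) $$ (i,i) = A $$ (i,i) * B $$ (i,i)"
proof -
  have "(A * B) $$ (i,i) = (\<Sum>k<n. A $$ (i,k) * B $$ (k,i))"
    using assms by (simp add: scalar_prod_def lessThan_atLeast0)
  also have "\<dots> = (\<Sum>k<n. if k = i then A $$ (i,i) * B $$ (i,i) else 0)"
    using assms unfolding upper_triangular_def
    by (intro sum.cong refl) (auto dest!: nat_neq_iff[THEN iffD1])
  finally show ?thesis using assms by simp
qed

lemma
  fixes A :: "'a::conjugatable_ordered_field mat"
  assumes A: "A \<in> carrier_mat n n" and cp: "char_poly A = (\<Prod>t\<leftarrow>\<theta>. [:- t, 1:])"
  shows trace_eq_sum_eigenvalues: "trace A = (\<Sum>i<length \<theta>. \<theta> ! i)"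
    and trace_square_eq_sum_squares_eigenvalues: "trace (A * A) = (\<Sum>i<length \<theta>. (\<theta> ! i)\<^sup>2)"
proof -
  obtain B P Q where "schur_decomposition A \<theta> = (B, P, Q)"
    by (cases "schur_decomposition A \<theta>") auto
  from schur_decomposition[OF A cp this]
  have wit: "similar_mat_wit A B P Q" and ut: "upper_triangular B" and diag: "diag_mat B = \<theta>"
    by auto
  have B: "B \<in> carrier_mat n n" using similar_mat_witD2[OF A wit] by auto
  have len: "length \<theta> = n" and diag_entry: "\<And>i. i < n \<Longrightarrow> B $$ (i,i) = \<theta> ! i"
    using diag B by (auto simp: diag_mat_def)
  show "trace A = (\<Sum>i<length \<theta>. \<theta> ! i)"
    using trace_similar_mat_wit[OF wit] B by (simp add: trace_def len diag_entry)
  have "similar_mat_wit (A * A) (B * B) P Q"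
    using similar_mat_wit_pow[OF wit, of 2] A B by (simp add: numeral_2_eq_2)
  then have "trace (A * A) = trace (B * B)" by (rule trace_similar_mat_wit)
  also have "\<dots> = (\<Sum>i<length \<theta>. (\<theta> ! i)\<^sup>2)"
    using B upper_triangular_mult_diag[OF ut ut B B]
    by (simp add: trace_def len diag_entry power2_eq_square del: index_mult_mat(1))
  finally show "trace (A * A) = (\<Sum>i<length \<theta>. (\<theta> ! i)\<^sup>2)" .
qed

lemma adj_mat_carrier [simp]: "adj_mat n E \<in> carrier_mat n n"
  and adj_mat_dim [simp]: "dim_row (adj_mat n E) = n" "dim_col (adj_mat n E) = n"
  by (simp_all add: adj_mat_def)

lemma adj_mat_index [simp]:
  "i < n \<Longrightarrow> j < n \<Longrightarrow> adj_mat n E $$ (i,j) = (if E i j then 1 else 0)"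
  by (simp add: adj_mat_def)

lemma finite_nbrs [simp]: "finite (nbrs n E i)"
  by (simp add: nbrs_def)

lemma nbrs_subset: "nbrs n E i \<subseteq> {..<n}"
  by (auto simp: nbrs_def)

lemma sum_adj_mult_eq_sum_nbrs:
  fixes f :: "nat \<Rightarrow> real"
  shows "(\<Sum>j<n. (if E i j then 1 else 0) * f j) = (\<Sum>j\<in>nbrs n E i. f j)"
proof -
  have "(\<Sum>j<n. (if E i j then 1 else 0) * f j) = (\<Sum>j<n. if E i j then f j else 0)"
    by (intro sum.cong) auto
  also have "\<dots> = (\<Sum>j\<in>{j \<in> {..<n}. E i j}. f j)"
    by (rule sum.inter_filter[symmetric]) simp
  also have "{j \<in> {..<n}. E i j} = nbrs n E i"
    by (auto simp: nbrs_def)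
  finally show ?thesis .
qed

lemma adj_mat_mult_vec_index:
  assumes "v \<in> carrier_vec n" "i < n"
  shows "(adj_mat n E *\<^sub>v v) $ i = (\<Sum>j\<in>nbrs n E i. v $ j)"
  using assms by (simp add: scalar_prod_def lessThan_atLeast0[symmetric] sum_adj_mult_eq_sum_nbrs)

lemma adj_mat_square_index:
  assumes "simple_graph n E" "i < n" "k < n"
  shows "(adj_mat n E * adj_mat n E) $$ (i,k) = real (card (nbrs n E i \<inter> nbrs n E k))"
proof -
  have "(adj_mat n E * adj_mat n E) $$ (i,k) = (\<Sum>j<n. (if E i j then 1 else 0) * (if E k j then 1 else 0))"
    using assms unfolding simple_graph_def
    by (auto simp: scalar_prod_def lessThan_atLeast0[symmetric] intro!: sum.cong)
  also have "\<dots> = (\<Sum>j\<in>nbrs n E i. if E k j then 1 else 0)"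
    by (rule sum_adj_mult_eq_sum_nbrs)
  also have "\<dots> = real (card {j \<in> nbrs n E i. E k j})"
    by (simp add: sum.inter_filter[symmetric])
  also have "{j \<in> nbrs n E i. E k j} = nbrs n E i \<inter> nbrs n E k"
    by (auto simp: nbrs_def)
  finally show ?thesis .
qed

lemma trace_adj_mat: "simple_graph n E \<Longrightarrow> trace (adj_mat n E) = 0"
  by (simp add: trace_def simple_graph_def)

lemma sum_card_nbrs_eq_twice_num_edges:
  assumes "simple_graph n E"
  shows "(\<Sum>i<n. card (nbrs n E i)) = 2 * num_edges n E"
proof -
  define up where "up = {(i,j). i < j \<and> j < n \<and> E i j}"
  define down where "down = {(i,j). j < i \<and> i < n \<and> E i j}"
  have "(\<Sum>i<n. card (nbrs n E i)) = card (Sigma {..<n} (nbrs n E))"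
    by simp
  also have "Sigma {..<n} (nbrs n E) = up \<union> down"
    using assms unfolding up_def down_def nbrs_def simple_graph_def
    by (auto simp: nat_neq_iff) (metis linorder_neqE_nat)
  also have "card (up \<union> down) = card up + card down"
    by (rule card_Un_disjoint) (auto simp: up_def down_def
        intro: finite_subset[of _ "{..<n} \<times> {..<n}"])
  also have "down = prod.swap ` up"
    using assms unfolding up_def down_def simple_graph_def by auto
  also have "card (prod.swap ` up) = card up"
    by (simp add: card_image)
  finally show ?thesis by (simp add: num_edges_def up_def)
qed

lemma trace_adj_mat_square:
  assumes "simple_graph n E"
  shows "trace (adj_mat n E * adj_mat n E) = 2 * real (num_edges n E)"
proof -
  have "trace (adj_mat n E * adj_mat n E) = (\<Sum>i<n. real (card (nbrs n E i)))"
    using adj_mat_square_index[OF assms] by (simp add: trace_def del: index_mult_mat(1))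
  also have "\<dots> = 2 * real (num_edges n E)"
    using sum_card_nbrs_eq_twice_num_edges[OF assms] by (metis of_nat_sum of_nat_mult of_nat_numeral)
  finally show ?thesis .
qed

definition regular_graph :: "nat \<Rightarrow> (nat \<Rightarrow> nat \<Rightarrow> bool) \<Rightarrow> nat \<Rightarrow> bool" where
  "regular_graph n E d \<longleftrightarrow> simple_graph n E \<and> (\<forall>i<n. card (nbrs n E i) = d)"

lemma strongly_regular_imp_regular_graph:
  "strongly_regular n E d lam mu \<Longrightarrow> regular_graph n E d"
  by (simp add: strongly_regular_def regular_graph_def)

lemma
  assumes "eigenvector (adj_mat n E) v t"
  shows eigenvector_adj_mat_carrier: "v \<in> carrier_vec n"
    and eigenvector_adj_mat_nonzero: "\<exists>i<n. v $ i \<noteq> 0"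
    and eigenvector_adj_mat_index: "\<And>i. i < n \<Longrightarrow> t * v $ i = (\<Sum>j\<in>nbrs n E i. v $ j)"
proof -
  show v: "v \<in> carrier_vec n" using assms by (simp add: eigenvector_def)
  show "\<exists>i<n. v $ i \<noteq> 0" using assms v by (auto simp: eigenvector_def vec_eq_iff)
  fix i assume "i < n"
  then have "t * v $ i = (adj_mat n E *\<^sub>v v) $ i"
    using assms v by (simp add: eigenvector_def)
  also have "\<dots> = (\<Sum>j\<in>nbrs n E i. v $ j)"
    by (rule adj_mat_mult_vec_index[OF v \<open>i < n\<close>])
  finally show "t * v $ i = (\<Sum>j\<in>nbrs n E i. v $ j)" .
qed

lemma eigenvector_adj_mat_sum_zero:
  assumes "eigenvector (adj_mat n E) v t" "v \<bullet> vec n (\<lambda>_. 1) = 0"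
  shows "(\<Sum>i<n. v $ i) = 0"
  using assms eigenvector_adj_mat_carrier[OF assms(1)]
  by (simp add: scalar_prod_def lessThan_atLeast0)

lemma regular_graph_eigenvector_sum:
  assumes reg: "regular_graph n E d" and ev: "eigenvector (adj_mat n E) v t"
  shows "t * (\<Sum>i<n. v $ i) = real d * (\<Sum>i<n. v $ i)"
proof -
  have nbrs_eq: "nbrs n E i = {j \<in> {..<n}. E j i}" if "i < n" for i
    using reg that by (auto simp: regular_graph_def simple_graph_def nbrs_def)
  have "t * (\<Sum>i<n. v $ i) = (\<Sum>i<n. \<Sum>j\<in>{j \<in> {..<n}. E i j}. v $ j)"
    by (auto simp: sum_distrib_left eigenvector_adj_mat_index[OF ev] nbrs_def intro!: sum.cong)
  also have "\<dots> = (\<Sum>j<n. \<Sum>i\<in>{i \<in> {..<n}. E i j}. v $ j)"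
    by (rule sum.swap_restrict) simp_all
  also have "\<dots> = (\<Sum>j<n. real (card (nbrs n E j)) * v $ j)"
    by (simp add: nbrs_eq)
  also have "\<dots> = real d * (\<Sum>i<n. v $ i)"
    using reg by (simp add: regular_graph_def sum_distrib_left)
  finally show ?thesis .
qed

lemma regular_graph_eigenvalue_abs_le:
  assumes reg: "regular_graph n E d" and ev: "eigenvector (adj_mat n E) v t"
  shows "\<bar>t\<bar> \<le> real d"
proof -
  define M where "M = Max ((\<lambda>j. \<bar>v $ j\<bar>) ` {..<n})"
  obtain i0 where "i0 < n" "v $ i0 \<noteq> 0" using eigenvector_adj_mat_nonzero[OF ev] by blast
  then have "M \<in> (\<lambda>j. \<bar>v $ j\<bar>) ` {..<n}"
    unfolding M_def by (intro Max_in) auto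
  then obtain i where i: "i < n" "\<bar>v $ i\<bar> = M" by auto
  have le_M: "\<bar>v $ j\<bar> \<le> M" if "j < n" for j
    unfolding M_def using that by (intro Max_ge) auto
  have "0 < M" using le_M[OF \<open>i0 < n\<close>] \<open>v $ i0 \<noteq> 0\<close> by linarith
  have "\<bar>t\<bar> * M = \<bar>\<Sum>j\<in>nbrs n E i. v $ j\<bar>"
    using eigenvector_adj_mat_index[OF ev i(1)] i(2) by (metis abs_mult)
  also have "\<dots> \<le> (\<Sum>j\<in>nbrs n E i. M)"
    using nbrs_subset le_M by (intro order.trans[OF sum_abs sum_mono]) blast
  also have "\<dots> = real d * M"
    using reg i(1) by (simp add: regular_graph_def)
  finally show ?thesis using \<open>0 < M\<close> by simp
qed

lemma regular_graph_eigenvalue_restricted: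
  assumes reg: "regular_graph n E d" and "eigenvalue (adj_mat n E) t" "t \<noteq> real d"
  shows "restricted_eigenvalue n E t"
proof -
  obtain v where ev: "eigenvector (adj_mat n E) v t" using assms(2) by (auto simp: eigenvalue_def)
  then have "(\<Sum>i<n. v $ i) = 0" using regular_graph_eigenvector_sum[OF reg ev] assms(3) by simp
  then show ?thesis using ev eigenvector_adj_mat_carrier[OF ev]
    by (auto simp: restricted_eigenvalue_def scalar_prod_def lessThan_atLeast0)
qed

lemma strongly_regular_card_common_nbrs:
  assumes "strongly_regular n E d lam mu" "i < n" "k < n"
  shows "card (nbrs n E i \<inter> nbrs n E k) = (if k = i then d else if E i k then lam else mu)"
  using assms by (auto simp: strongly_regular_def)

lemma strongly_regular_restricted_eigenvalue_quadratic:
  assumes srg: "strongly_regular n E d lam mu" and "restricted_eigenvalue n E t"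
  shows "t\<^sup>2 = (real lam - real mu) * t + (real d - real mu)"
proof -
  let ?A = "adj_mat n E"
  obtain v where ev: "eigenvector ?A v t" and "v \<bullet> vec n (\<lambda>_. 1) = 0"
    using assms(2) by (auto simp: restricted_eigenvalue_def)
  then have sum_v: "(\<Sum>k<n. v $ k) = 0" by (rule eigenvector_adj_mat_sum_zero)
  have v: "v \<in> carrier_vec n" and Av: "?A *\<^sub>v v = t \<cdot>\<^sub>v v"
    using ev by (auto simp: eigenvector_def)
  obtain i where i: "i < n" "v $ i \<noteq> 0" using eigenvector_adj_mat_nonzero[OF ev] by blast
  have sg: "simple_graph n E" using srg by (simp add: strongly_regular_def)
  have coeff: "real (card (nbrs n E i \<inter> nbrs n E k)) =
      (real d - real mu) * (if k = i then 1 else 0) + (real lam - real mu) * (if E i k then 1 else 0)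
      + real mu" if "k < n" for k
    using strongly_regular_card_common_nbrs[OF srg i(1) that] sg i(1) that
    by (auto simp: simple_graph_def)
  have "(?A * ?A) *\<^sub>v v = ?A *\<^sub>v (t \<cdot>\<^sub>v v)"
    using v by (simp add: assoc_mult_mat_vec[of _ n n _ n] Av)
  also have "\<dots> = t \<cdot>\<^sub>v (t \<cdot>\<^sub>v v)"
    using v by (simp add: mult_mat_vec[of _ n n] Av)
  finally have "t\<^sup>2 * v $ i = ((?A * ?A) *\<^sub>v v) $ i"
    using v i(1) by (simp add: power2_eq_square)
  also have "\<dots> = (\<Sum>k<n. real (card (nbrs n E i \<inter> nbrs n E k)) * v $ k)"
    using v i(1) adj_mat_square_index[OF sg i(1)]
    by (simp add: scalar_prod_def lessThan_atLeast0 del: index_mult_mat(1))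
  also have "\<dots> = (\<Sum>k<n. (if k = i then (real d - real mu) * v $ k else 0)
      + (real lam - real mu) * ((if E i k then 1 else 0) * v $ k) + real mu * v $ k)"
    by (intro sum.cong) (auto simp: coeff algebra_simps)
  also have "\<dots> = (real d - real mu) * v $ i
      + (real lam - real mu) * (\<Sum>k<n. (if E i k then 1 else 0) * v $ k) + real mu * (\<Sum>k<n. v $ k)"
    using i(1) by (simp add: sum.distrib sum_distrib_left)
  also have "(\<Sum>k<n. (if E i k then 1 else 0) * v $ k) = t * v $ i"
    by (simp add: sum_adj_mult_eq_sum_nbrs eigenvector_adj_mat_index[OF ev i(1)])
  finally have "(t\<^sup>2 - ((real lam - real mu) * t + (real d - real mu))) * v $ i = 0"
    using sum_v by (simp add: algebra_simps)
  then show ?thesis using i(2) by simp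
qed

lemma complete_graph_restricted_eigenvalue:
  assumes sg: "simple_graph n E" and complete: "\<forall>i<n. \<forall>j<n. i \<noteq> j \<longrightarrow> E i j"
    and "restricted_eigenvalue n E t"
  shows "t = -1"
proof -
  obtain v where ev: "eigenvector (adj_mat n E) v t" and "v \<bullet> vec n (\<lambda>_. 1) = 0"
    using assms(3) by (auto simp: restricted_eigenvalue_def)
  then have sum_v: "(\<Sum>k<n. v $ k) = 0" by (rule eigenvector_adj_mat_sum_zero)
  obtain i where i: "i < n" "v $ i \<noteq> 0" using eigenvector_adj_mat_nonzero[OF ev] by blast
  have "nbrs n E i = {..<n} - {i}"
    using sg complete i(1) by (auto simp: nbrs_def simple_graph_def)
  then have "t * v $ i = - v $ i"
    using eigenvector_adj_mat_index[OF ev i(1)] sum_v i(1) by (simp add: sum_diff1)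
  then have "(t + 1) * v $ i = 0" by (simp add: algebra_simps)
  then show ?thesis using i(2) by simp
qed

lemma strongly_regular_restricted_eigenvalues_mult:
  assumes srg: "strongly_regular n E d lam mu"
    and "restricted_eigenvalue n E r" "restricted_eigenvalue n E s" "r \<noteq> s"
  shows "r * s = real mu - real d"
proof -
  have qr: "r\<^sup>2 = (real lam - real mu) * r + (real d - real mu)"
    and qs: "s\<^sup>2 = (real lam - real mu) * s + (real d - real mu)"
    using strongly_regular_restricted_eigenvalue_quadratic[OF srg] assms(2,3) by auto
  have "(r - s) * (r + s - (real lam - real mu)) = 0"
    using qr qs by (simp add: algebra_simps power2_eq_square)
  then have s_eq: "s = real lam - real mu - r" using \<open>r \<noteq> s\<close> by simp
  show ?thesis unfolding s_eq using qr by (simp add: algebra_simps power2_eq_square)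
qed

lemma strongly_regular_restricted_eigenvalue_nonneg:
  assumes srg: "strongly_regular n E d lam mu"
    and restr: "restricted_eigenvalue n E r" "restricted_eigenvalue n E s" and "s < r"
  shows "0 \<le> r"
proof (cases "\<forall>i<n. \<forall>j<n. i \<noteq> j \<longrightarrow> E i j")
  case True
  have "simple_graph n E" using srg by (simp add: strongly_regular_def)
  then have "r = -1" "s = -1" using complete_graph_restricted_eigenvalue True restr by blast+
  with \<open>s < r\<close> show ?thesis by simp
next
  case False
  then obtain i j where ij: "i < n" "j < n" "i \<noteq> j" "\<not> E i j" by blast
  have "mu = card (nbrs n E i \<inter> nbrs n E j)"
    using strongly_regular_card_common_nbrs[OF srg ij(1,2)] ij(3,4) by simp
  also have "\<dots> \<le> card (nbrs n E i)" by (intro card_mono) auto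
  also have "\<dots> = d" using srg ij(1) by (simp add: strongly_regular_def)
  finally have "r * s \<le> 0"
    using strongly_regular_restricted_eigenvalues_mult[OF srg restr] \<open>s < r\<close> by simp
  then show ?thesis using \<open>s < r\<close> by (smt (verit) mult_neg_neg)
qed

lemma eigenvalue_iff_mem_roots:
  fixes A :: "'a::field mat"
  assumes "A \<in> carrier_mat n n" "char_poly A = (\<Prod>t\<leftarrow>\<theta>. [:- t, 1:])"
  shows "eigenvalue A x \<longleftrightarrow> x \<in> set \<theta>"
proof -
  have "eigenvalue A x \<longleftrightarrow> poly (char_poly A) x = 0"
    by (rule eigenvalue_root_char_poly[OF assms(1)])
  also have "\<dots> \<longleftrightarrow> x \<in> set \<theta>"
    by (auto simp: assms(2) poly_prod_list o_def image_iff)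
  finally show ?thesis .
qed

lemma strongly_regular_eigenvalue_cases:
  assumes srg: "strongly_regular n E d lam mu"
    and only_rs: "\<forall>t. restricted_eigenvalue n E t \<longrightarrow> t = r \<or> t = s"
    and "eigenvalue (adj_mat n E) x"
  shows "x = real d \<or> x = r \<or> x = s"
  using regular_graph_eigenvalue_restricted[OF strongly_regular_imp_regular_graph[OF srg]]
    assms(3) only_rs by blast

lemma strongly_regular_restricted_eigenvalue_neg:
  assumes srg: "strongly_regular n E d lam mu"
    and restr_r: "restricted_eigenvalue n E r" and "s < r"
    and only_rs: "\<forall>t. restricted_eigenvalue n E t \<longrightarrow> t = r \<or> t = s"
    and cp: "char_poly (adj_mat n E) = (\<Prod>t\<leftarrow>\<theta>. [:- t, 1:])"
  shows "s < 0"
proof (rule ccontr)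
  assume "\<not> s < 0"
  have eig: "eigenvalue (adj_mat n E) x \<longleftrightarrow> x \<in> set \<theta>" for x
    by (rule eigenvalue_iff_mem_roots[OF adj_mat_carrier cp])
  have nonneg: "0 \<le> \<theta> ! i" if "i < length \<theta>" for i
    using strongly_regular_eigenvalue_cases[OF srg only_rs, of "\<theta> ! i"] eig that
      \<open>\<not> s < 0\<close> \<open>s < r\<close> by fastforce
  have "(\<Sum>i<length \<theta>. \<theta> ! i) = 0"
    using trace_eq_sum_eigenvalues[OF adj_mat_carrier cp] srg
    by (simp add: trace_adj_mat strongly_regular_def)
  then have "\<forall>i<length \<theta>. \<theta> ! i = 0"
    using sum_nonneg_eq_0_iff[of "{..<length \<theta>}" "(!) \<theta>"] nonneg by simp
  moreover have "r \<in> set \<theta>"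
    using restr_r eig by (auto simp: restricted_eigenvalue_def eigenvalue_def)
  ultimately have "r = 0" by (auto simp: in_set_conv_nth)
  then show False using \<open>\<not> s < 0\<close> \<open>s < r\<close> by simp
qed

lemma strongly_regular_eigenvalue_gap:
  assumes srg: "strongly_regular n E d lam mu"
    and restr: "restricted_eigenvalue n E r" "restricted_eigenvalue n E s" and "s < r"
    and only_rs: "\<forall>t. restricted_eigenvalue n E t \<longrightarrow> t = r \<or> t = s"
    and "eigenvalue (adj_mat n E) x"
  shows "x \<le> s \<or> (0 \<le> x \<and> x \<le> real d)"
proof -
  obtain v where "eigenvector (adj_mat n E) v r"
    using restr(1) by (auto simp: restricted_eigenvalue_def)
  then have "r \<le> real d"
    using regular_graph_eigenvalue_abs_le[OF strongly_regular_imp_regular_graph[OF srg]] by fastforce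
  moreover have "0 \<le> r"
    using strongly_regular_restricted_eigenvalue_nonneg[OF srg restr \<open>s < r\<close>] .
  ultimately show ?thesis
    using strongly_regular_eigenvalue_cases[OF srg only_rs \<open>eigenvalue _ x\<close>] by auto
qed

lemma pos_part_square_le:
  fixes x s d :: real
  assumes "s < 0" "0 \<le> d" "x \<le> s \<or> (0 \<le> x \<and> x \<le> d)"
  shows "(d - s) * (max 0 x)\<^sup>2 \<le> d * (x\<^sup>2 - s * x)"
  using assms(3)
proof
  assume "x \<le> s"
  then have "0 \<le> d * (x * (x - s))"
    using assms(1,2) by (intro mult_nonneg_nonneg mult_nonpos_nonpos) auto
  then show ?thesis using \<open>x \<le> s\<close> assms(1) by (simp add: power2_eq_square algebra_simps)
next
  assume x: "0 \<le> x \<and> x \<le> d"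
  then have "0 \<le> - s * x * (d - x)"
    using assms(1) by (intro mult_nonneg_nonneg) auto
  then show ?thesis using x by (simp add: power2_eq_square algebra_simps)
qed

lemma sum_pos_part_squares_le:
  fixes x :: "'i \<Rightarrow> real"
  assumes "s < 0" "0 \<le> d" "\<And>i. i \<in> I \<Longrightarrow> x i \<le> s \<or> (0 \<le> x i \<and> x i \<le> d)"
  shows "(d - s) * (\<Sum>i\<in>I. (max 0 (x i))\<^sup>2) \<le> d * ((\<Sum>i\<in>I. (x i)\<^sup>2) - s * (\<Sum>i\<in>I. x i))"
proof -
  have "(d - s) * (\<Sum>i\<in>I. (max 0 (x i))\<^sup>2) = (\<Sum>i\<in>I. (d - s) * (max 0 (x i))\<^sup>2)"
    by (simp add: sum_distrib_left)
  also have "\<dots> \<le> (\<Sum>i\<in>I. d * ((x i)\<^sup>2 - s * x i))"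
    using pos_part_square_le[OF assms(1,2) assms(3)] by (rule sum_mono)
  also have "\<dots> = d * ((\<Sum>i\<in>I. (x i)\<^sup>2) - s * (\<Sum>i\<in>I. x i))"
    by (simp add: sum_distrib_left[symmetric] sum_subtractf)
  finally show ?thesis .
qed

lemma sorted_wrt_ge_nth_pos:
  fixes xs :: "'a::{linorder, zero} list"
  assumes sorted: "sorted_wrt (\<ge>) xs" and i: "i < length (filter (\<lambda>t. t > 0) xs)"
  shows "xs ! i > 0"
proof (rule ccontr)
  assume "\<not> xs ! i > 0"
  then have "\<not> xs ! j > 0" if "i \<le> j" "j < length xs" for j
    using sorted_wrt_nth_less[OF sorted, of i j] that by (cases "i = j") auto
  then have "{j. j < length xs \<and> xs ! j > 0} \<subseteq> {..<i}"
    by (metis (mono_tags) lessThan_iff mem_Collect_eq not_le subsetI)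
  from card_mono[OF _ this] show False
    using i by (simp add: length_filter_conv_card)
qed

theorem mainTheorem4:
  fixes n d lam mu :: nat and E :: "nat \<Rightarrow> nat \<Rightarrow> bool"
    and r s :: real and \<theta> :: "real list"
  assumes srg: "strongly_regular n E d lam mu"
    and restr_r: "restricted_eigenvalue n E r"
    and restr_s: "restricted_eigenvalue n E s"
    and r_gt_s: "r > s"
    and only_rs: "\<forall>t. restricted_eigenvalue n E t \<longrightarrow> t = r \<or> t = s"
    and omega: "real (clique_number n E) = 1 - real d / s"
    and theta_len: "length \<theta> = n"
    and theta_sorted: "sorted_wrt (\<ge>) \<theta>"
    and theta_eig: "char_poly (adj_mat n E) = (\<Prod>t\<leftarrow>\<theta>. [:- t, 1:])"
  shows "(\<Sum>i < min (length (filter (\<lambda>t. t > 0) \<theta>)) (clique_number n E). (\<theta> ! i)\<^sup>2)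
           \<le> 2 * real (num_edges n E) * (real (clique_number n E) - 1) / real (clique_number n E)"
proof -
  let ?l = "min (length (filter (\<lambda>t. t > 0) \<theta>)) (clique_number n E)"
  let ?P = "\<Sum>i<n. (max 0 (\<theta> ! i))\<^sup>2"
  have sg: "simple_graph n E" using srg by (simp add: strongly_regular_def)
  have "s < 0"
    by (rule strongly_regular_restricted_eigenvalue_neg[OF srg restr_r r_gt_s only_rs theta_eig])
  moreover have "\<theta> ! i \<le> s \<or> (0 \<le> \<theta> ! i \<and> \<theta> ! i \<le> real d)" if "i < n" for i
    using strongly_regular_eigenvalue_gap[OF srg restr_r restr_s r_gt_s only_rs] that theta_len
      eigenvalue_iff_mem_roots[OF adj_mat_carrier theta_eig] by simp
  ultimately have "(real d - s) * ?P \<le> real d * ((\<Sum>i<n. (\<theta> ! i)\<^sup>2) - s * (\<Sum>i<n. \<theta> ! i))"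
    by (intro sum_pos_part_squares_le) auto
  also have "\<dots> = real d * (2 * real (num_edges n E))"
    using trace_eq_sum_eigenvalues[OF adj_mat_carrier theta_eig]
      trace_square_eq_sum_squares_eigenvalues[OF adj_mat_carrier theta_eig]
    by (simp add: theta_len trace_adj_mat[OF sg] trace_adj_mat_square[OF sg])
  finally have P_le: "(real d - s) * ?P \<le> real d * (2 * real (num_edges n E))" .
  have "(\<Sum>i<?l. (\<theta> ! i)\<^sup>2) = (\<Sum>i<?l. (max 0 (\<theta> ! i))\<^sup>2)"
    using sorted_wrt_ge_nth_pos[OF theta_sorted] by (intro sum.cong) (auto intro: less_imp_le)
  also have "\<dots> \<le> ?P"
    using length_filter_le[of "\<lambda>t. t > 0" \<theta>] theta_len by (intro sum_mono2) auto
  also have "\<dots> \<le> real d * (2 * real (num_edges n E)) / (real d - s)"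
    using P_le \<open>s < 0\<close> by (simp add: pos_le_divide_eq mult.commute)
  also have "\<dots> = 2 * real (num_edges n E) * (real (clique_number n E) - 1) / real (clique_number n E)"
    unfolding omega using \<open>s < 0\<close> by (simp add: field_simps)
  finally show ?thesis .
qed

end
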